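(* Let $n\ge 1$ and let $\mathcal{L}$ be a fully dissipative $n$-qubit Lindbladian all of whose jump operators are $n$-qubit Pauli operators, i.e. $$\mathcal{L}(\rho)=\sum_{j}\gamma_j\Big(P_j\rho P_j^{\dagger}-\tfrac12\{P_j^{\dagger}P_j,\rho\}\Big)=\sum_j\gamma_j\big(P_j\rho P_j-\rho\big),$$ where each $P_j$ is a tensor product of single-qubit operators from $\{I,X,Y,Z\}$ and $\gamma_j\ge 0$. Then $\mathcal{L}$ is quantum programmable.
   Context: A Lindbladian on a finite-dimensional Hilbert space $\mathcal{H}_S$ is a superoperator of GKSL form $\mathcal{L}(\rho)=-i[H,\rho]+\sum_j\gamma_j(L_j\rho L_j^\dagger-\frac12\{L_j^\dagger L_j,\rho\})$ with $H$ Hermitian and $\gamma_j\ge 0$; "fully dissipative" means $H=0$. It generates the quantum dynamical semigroup $(e^{t\mathcal{L}})_{t\ge0}$ of CPTP maps. Given a class $\Omega$ of linear maps from operators on $\mathcal{H}_S\otimes\mathcal{H}_P$ to operators on $\mathcal{H}_S$ (with $\mathcal{H}_P$ a finite-dimensional program space), $\mathcal{L}$ is (exactly) $\Omega$-programmable if there exist a map $\mathcal{P}\in\Omega$ and a continuous one-parameter family of density operators $(\pi_t)_{t\ge0}$ on $\mathcal{H}_P$ such that $\mathcal{P}(\rho\otimes\pi_t)=e^{t\mathcal{L}}(\rho)$ for all $t\ge0$ and all $\rho$ (equivalently, the maps $\mathcal{P}(\cdot\otimes\pi_t)$ and $e^{t\mathcal{L}}$ coincide). $\mathcal{L}$ is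 quantum programmable if this holds with $\Omega$ the set of completely positive trace-preserving (CPTP) maps. *)

theory Defs
  imports Complex_Main "Jordan_Normal_Form.Matrix"
begin

definition adj :: "complex mat \<Rightarrow> complex mat" where
  "adj A = mat (dim_col A) (dim_row A) (\<lambda>(i,j). cnj (A $$ (j,i)))"

definition tr :: "complex mat \<Rightarrow> complex" where
  "tr A = (\<Sum>i<dim_row A. A $$ (i,i))"

definition psd :: "nat \<Rightarrow> complex mat \<Rightarrow> bool" where
  "psd d A \<longleftrightarrow> A \<in> carrier_mat d d \<and>
     (\<forall>v :: nat \<Rightarrow> complex.
        (\<Sum>i<d. \<Sum>j<d. cnj (v i) * A $$ (i,j) * v j) \<in> \<real> \<and>
        Re (\<Sum>i<d. \<Sum>j<d. cnj (v i) * A $$ (i,j) * v j) \<ge> 0)"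

definition density :: "nat \<Rightarrow> complex mat \<Rightarrow> bool" where
  "density d A \<longleftrightarrow> psd d A \<and> tr A = 1"

(* Kronecker (tensor) product; index of (x,r) in A \<otimes> B is x * dim B + r *)
definition kron :: "complex mat \<Rightarrow> complex mat \<Rightarrow> complex mat" where
  "kron A B = mat (dim_row A * dim_row B) (dim_col A * dim_col B)
     (\<lambda>(i,j). A $$ (i div dim_row B, j div dim_col B) * B $$ (i mod dim_row B, j mod dim_col B))"

(* single-qubit Paulis: 0 = I, 1 = X, 2 = Y, 3 = Z *)
definition pauli1 :: "nat \<Rightarrow> complex mat" where
  "pauli1 a = mat 2 2 (\<lambda>(i,j).
     if a = 1 then (if i \<noteq> j then 1 else 0)
     else if a = 2 then (if i = 0 \<and> j = 1 then - \<i> else if i = 1 \<and> j = 0 then \<i> else 0)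
     else if a = 3 then (if i = j then (if i = 0 then 1 else -1) else 0)
     else (if i = j then 1 else 0))"

definition pauli_string :: "nat list \<Rightarrow> complex mat" where
  "pauli_string xs = foldr (\<lambda>a M. kron (pauli1 a) M) xs (1\<^sub>m 1)"

definition is_pauli :: "nat \<Rightarrow> complex mat \<Rightarrow> bool" where
  "is_pauli n P \<longleftrightarrow> (\<exists>xs. length xs = n \<and> set xs \<subseteq> {0..<4} \<and> P = pauli_string xs)"

definition lindblad :: "nat \<Rightarrow> (real \<times> complex mat) list \<Rightarrow> complex mat \<Rightarrow> complex mat" where
  "lindblad d jumps \<rho> = mat d d (\<lambda>(i,j).
     (\<Sum>(g,L)\<leftarrow>jumps. complex_of_real g *
        (L * \<rho> * adj L - (1/2) \<cdot>\<^sub>m (adj L * L * \<rho> + \<rho> * (adj L * L))) $$ (i,j)))"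

definition exp_super :: "nat \<Rightarrow> (complex mat \<Rightarrow> complex mat) \<Rightarrow> real \<Rightarrow> complex mat \<Rightarrow> complex mat" where
  "exp_super d L t \<rho> = mat d d (\<lambda>(i,j).
     (\<Sum>k. (complex_of_real t ^ k / of_nat (fact k)) * ((L ^^ k) \<rho>) $$ (i,j)))"

(* Phi \<otimes> id_k acting on (a*k) x (a*k) matrices (ancilla is the second tensor factor) *)
definition ext_id :: "nat \<Rightarrow> nat \<Rightarrow> nat \<Rightarrow> (complex mat \<Rightarrow> complex mat) \<Rightarrow> complex mat \<Rightarrow> complex mat" where
  "ext_id a b k \<Phi> M = mat (b*k) (b*k) (\<lambda>(i,j).
     \<Phi> (mat a a (\<lambda>(x,y). M $$ (x*k + i mod k, y*k + j mod k))) $$ (i div k, j div k))"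

definition cptp :: "nat \<Rightarrow> nat \<Rightarrow> (complex mat \<Rightarrow> complex mat) \<Rightarrow> bool" where
  "cptp a b \<Phi> \<longleftrightarrow>
     (\<forall>A \<in> carrier_mat a a. \<Phi> A \<in> carrier_mat b b) \<and>
     (\<forall>A \<in> carrier_mat a a. \<forall>B \<in> carrier_mat a a. \<Phi> (A + B) = \<Phi> A + \<Phi> B) \<and>
     (\<forall>c. \<forall>A \<in> carrier_mat a a. \<Phi> (c \<cdot>\<^sub>m A) = c \<cdot>\<^sub>m \<Phi> A) \<and>
     (\<forall>A \<in> carrier_mat a a. tr (\<Phi> A) = tr A) \<and>
     (\<forall>k M. psd (a*k) M \<longrightarrow> psd (b*k) (ext_id a b k \<Phi> M))"

definition quantum_programmable :: "nat \<Rightarrow> (complex mat \<Rightarrow> complex mat) \<Rightarrow> bool" where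
  "quantum_programmable d L \<longleftrightarrow>
     (\<exists>(m::nat) \<Phi> (\<pi> :: real \<Rightarrow> complex mat).
        cptp (d*m) d \<Phi> \<and>
        (\<forall>t\<ge>0. density m (\<pi> t)) \<and>
        (\<forall>i<m. \<forall>j<m. continuous_on {0..} (\<lambda>t. \<pi> t $$ (i,j))) \<and>
        (\<forall>t\<ge>0. \<forall>\<rho> \<in> carrier_mat d d. \<Phi> (kron \<rho> (\<pi> t)) = exp_super d L t \<rho>))"

end

theory Submission
  imports Defs
begin

text \<open>
  Pauli strings are Hermitian involutions and are closed under multiplication up to a unimodular
  phase. Hence conjugation by a Pauli jump operator maps the family \<open>Q \<rho> Q\<close>, \<open>Q\<close> ranging over
  all Pauli strings, into itself, and the Lindbladian acts on its span through the coefficient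
  matrix \<open>T - G\<close>, where \<open>T\<close> is nonnegative with all column sums equal to \<open>G = \<Sum>\<^sub>j \<gamma>\<^sub>j\<close>.
  Consequently \<open>e\<^bsup>t\<L>\<^esup>\<rho> = \<Sum>\<^sub>Q w\<^sub>Q(t) Q \<rho> Q\<close> with the probability vector
  \<open>w(t) = e\<^bsup>-Gt\<^esup> e\<^bsup>tT\<^esup> \<delta>\<^sub>I\<close>, continuous in \<open>t\<close>.
  Such a random unitary channel is implemented by the fixed CPTP map that measures the program
  register in the computational basis and applies the Pauli string \<open>Q\<close> on outcome \<open>Q\<close>, fed with
  the diagonal program state \<open>diag (w(t))\<close>.
\<close>

section \<open>Matrix entries, adjoints and Kronecker products\<close>

lemma index_mult_mat_sum:
  assumes "A \<in> carrier_mat r c" "B \<in> carrier_mat c s" "i < r" "j < s"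
  shows "(A * B) $$ (i,j) = (\<Sum>l<c. A $$ (i,l) * B $$ (l,j))"
  using assms by (auto simp: scalar_prod_def atLeast0LessThan intro!: sum.cong)

lemma index_mult_mat3:
  assumes A: "A \<in> carrier_mat d d" and B: "B \<in> carrier_mat d d" and C: "C \<in> carrier_mat d d"
    and i: "i < d" and j: "j < d"
  shows "(A * B * C) $$ (i,j) = (\<Sum>a<d. \<Sum>b<d. A $$ (i,a) * B $$ (a,b) * C $$ (b,j))"
proof -
  have "(A * B * C) $$ (i,j) = (\<Sum>b<d. (A * B) $$ (i,b) * C $$ (b,j))"
    by (rule index_mult_mat_sum[OF mult_carrier_mat[OF A B] C i j])
  also have "\<dots> = (\<Sum>b<d. \<Sum>a<d. A $$ (i,a) * B $$ (a,b) * C $$ (b,j))"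
    by (intro sum.cong refl) (simp only: index_mult_mat_sum[OF A B i] lessThan_iff sum_distrib_right)
  also have "\<dots> = (\<Sum>a<d. \<Sum>b<d. A $$ (i,a) * B $$ (a,b) * C $$ (b,j))"
    by (rule sum.swap)
  finally show ?thesis .
qed

lemma sum_lessThan_mult_nat:
  "(\<Sum>l<p*r. f l) = (\<Sum>x<p. \<Sum>y<r. f (x*r+y :: nat))"
proof -
  have "(\<Sum>y<r. f (x*r+y)) = sum f {x*r..<x*r+r}" for x
    using sum.shift_bounds_nat_ivl[of f 0 "x*r" r] by (simp add: atLeast0LessThan add.commute)
  then show ?thesis by (simp add: sum.nat_group)
qed

lemma sum_lessThan_mult3_nat:
  "(\<Sum>l<d*m*k. h l) = (\<Sum>a<d. \<Sum>q<m. \<Sum>r<k. h ((a*m+q)*k + r :: nat))"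
  by (simp add: sum_lessThan_mult_nat[of h "d*m"] sum_lessThan_mult_nat[of _ d m])

lemma mult_add_less_mult_nat: "a < d \<Longrightarrow> q < m \<Longrightarrow> a*m+q < d*(m::nat)"
proof -
  assume a: "a < d" and q: "q < m"
  have "a*m+q < (a+1)*m" using q by simp
  also have "\<dots> \<le> d*m" using a by (intro mult_le_mono1) simp
  finally show ?thesis .
qed

lemma mod_less_of_less_mult: "i < a * (b::nat) \<Longrightarrow> i mod b < b"
  by (cases "b = 0") auto

lemma smult_smult_mat: "a \<cdot>\<^sub>m (b \<cdot>\<^sub>m A) = (a * b :: complex) \<cdot>\<^sub>m A"
  by (rule eq_matI) simp_all

lemma one_smult_mat: "(1::complex) \<cdot>\<^sub>m A = A"
  by (rule eq_matI) simp_all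

lemma adj_dims [simp]: "dim_row (adj A) = dim_col A" "dim_col (adj A) = dim_row A"
  unfolding adj_def by simp_all

lemma index_adj: "i < dim_col A \<Longrightarrow> j < dim_row A \<Longrightarrow> adj A $$ (i,j) = cnj (A $$ (j,i))"
  unfolding adj_def by simp

lemma adj_carrier: "A \<in> carrier_mat r c \<Longrightarrow> adj A \<in> carrier_mat c r"
  unfolding carrier_mat_def by simp

lemma adj_one: "adj (1\<^sub>m d) = 1\<^sub>m d"
  by (rule eq_matI) (simp_all add: index_adj)

lemma adj_smult: "adj (c \<cdot>\<^sub>m A) = cnj c \<cdot>\<^sub>m adj A"
  by (rule eq_matI) (simp_all add: index_adj)

lemma adj_mult:
  assumes A: "A \<in> carrier_mat r c" and B: "B \<in> carrier_mat c s"
  shows "adj (A * B) = adj B * adj A"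
proof (rule eq_matI)
  have aB: "adj B \<in> carrier_mat s c" and aA: "adj A \<in> carrier_mat c r"
    using A B by (simp_all add: adj_carrier)
  fix i j assume "i < dim_row (adj B * adj A)" "j < dim_col (adj B * adj A)"
  then have i: "i < s" and j: "j < r" using A B by simp_all
  have "adj (A*B) $$ (i,j) = cnj ((A*B) $$ (j,i))"
    using A B i j by (simp add: index_adj)
  also have "\<dots> = cnj (\<Sum>l<c. A $$ (j,l) * B $$ (l,i))"
    by (simp only: index_mult_mat_sum[OF A B j i])
  also have "\<dots> = (\<Sum>l<c. adj B $$ (i,l) * adj A $$ (l,j))"
    using A B i j by (simp add: index_adj mult.commute)
  also have "\<dots> = (adj B * adj A) $$ (i,j)"
    by (simp only: index_mult_mat_sum[OF aB aA i j])
  finally show "adj (A*B) $$ (i,j) = (adj B * adj A) $$ (i,j)" .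
qed (use A B in simp_all)

lemma kron_dims [simp]:
  "dim_row (kron A B) = dim_row A * dim_row B"
  "dim_col (kron A B) = dim_col A * dim_col B"
  unfolding kron_def by simp_all

lemma kron_carrier:
  "A \<in> carrier_mat a1 a2 \<Longrightarrow> B \<in> carrier_mat b1 b2 \<Longrightarrow> kron A B \<in> carrier_mat (a1*b1) (a2*b2)"
  unfolding carrier_mat_def by simp

lemma index_kron:
  "i < dim_row A * dim_row B \<Longrightarrow> j < dim_col A * dim_col B \<Longrightarrow>
   kron A B $$ (i,j) = A $$ (i div dim_row B, j div dim_col B) * B $$ (i mod dim_row B, j mod dim_col B)"
  unfolding kron_def by simp

lemma kron_mult:
  assumes A: "A \<in> carrier_mat a1 a2" and B: "B \<in> carrier_mat b1 b2"
    and C: "C \<in> carrier_mat a2 a3" and D: "D \<in> carrier_mat b2 b3"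
  shows "kron A B * kron C D = kron (A*C) (B*D)"
proof (rule eq_matI)
  fix i j assume "i < dim_row (kron (A*C) (B*D))" "j < dim_col (kron (A*C) (B*D))"
  then have i: "i < a1*b1" and j: "j < a3*b3" using A B C D by simp_all
  have entry: "kron A B $$ (i,x*b2+y) * kron C D $$ (x*b2+y,j)
      = (A $$ (i div b1, x) * C $$ (x, j div b3)) * (B $$ (i mod b1, y) * D $$ (y, j mod b3))"
    if "x < a2" "y < b2" for x y
    using that i j A B C D mult_add_less_mult_nat[OF that]
    by (simp add: index_kron algebra_simps)
  have "(kron A B * kron C D) $$ (i,j) = (\<Sum>l<a2*b2. kron A B $$ (i,l) * kron C D $$ (l,j))"
    by (rule index_mult_mat_sum[OF kron_carrier[OF A B] kron_carrier[OF C D] i j])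
  also have "\<dots> = (\<Sum>x<a2. A $$ (i div b1, x) * C $$ (x, j div b3)) * (\<Sum>y<b2. B $$ (i mod b1, y) * D $$ (y, j mod b3))"
    by (simp add: sum_lessThan_mult_nat entry sum_product)
  also have "\<dots> = (A*C) $$ (i div b1, j div b3) * (B*D) $$ (i mod b1, j mod b3)"
    using i j
    by (simp add: index_mult_mat_sum[OF A C] index_mult_mat_sum[OF B D] less_mult_imp_div_less
        mod_less_of_less_mult del: index_mult_mat)
  also have "\<dots> = kron (A*C) (B*D) $$ (i,j)"
    using i j A B C D by (simp add: index_kron)
  finally show "(kron A B * kron C D) $$ (i,j) = kron (A*C) (B*D) $$ (i,j)" .
qed (use A B C D in simp_all)

lemma adj_kron: "adj (kron A B) = kron (adj A) (adj B)"
  by (rule eq_matI) (simp_all add: index_adj index_kron less_mult_imp_div_less mod_less_of_less_mult)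

lemma kron_smult_left: "kron (c \<cdot>\<^sub>m A) B = c \<cdot>\<^sub>m kron A B"
  by (rule eq_matI) (simp_all add: index_kron less_mult_imp_div_less mod_less_of_less_mult)

lemma kron_smult_right: "kron A (c \<cdot>\<^sub>m B) = c \<cdot>\<^sub>m kron A B"
  by (rule eq_matI) (simp_all add: index_kron less_mult_imp_div_less mod_less_of_less_mult)

lemma kron_one: "kron (1\<^sub>m a) (1\<^sub>m b) = 1\<^sub>m (a*b)"
proof (rule eq_matI)
  fix i j assume "i < dim_row (1\<^sub>m (a*b) :: complex mat)" "j < dim_col (1\<^sub>m (a*b) :: complex mat)"
  then have i: "i < a*b" and j: "j < a*b" by simp_all
  have "(i div b = j div b \<and> i mod b = j mod b) = (i = j)"
    by (metis div_mult_mod_eq)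
  then show "kron (1\<^sub>m a) (1\<^sub>m b) $$ (i,j) = 1\<^sub>m (a*b) $$ (i,j)"
    using i j by (auto simp: index_kron less_mult_imp_div_less mod_less_of_less_mult)
qed simp_all

section \<open>Pauli strings\<close>

lemma eq_mat2I:
  assumes "A \<in> carrier_mat 2 2" "B \<in> carrier_mat 2 2"
    "A $$ (0,0) = B $$ (0,0)" "A $$ (0,1) = B $$ (0,1)" "A $$ (1,0) = B $$ (1,0)" "A $$ (1,1) = B $$ (1,1)"
  shows "A = B"
proof (rule eq_matI)
  fix i j assume "i < dim_row B" "j < dim_col B"
  then have "i = 0 \<or> i = 1" "j = 0 \<or> j = 1" using assms(2) by auto
  then show "A $$ (i,j) = B $$ (i,j)" using assms(3-6) by auto
qed (use assms(1,2) in simp_all)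

lemma index_mult_mat2:
  assumes "A \<in> carrier_mat 2 2" "B \<in> carrier_mat 2 2" "i < 2" "j < 2"
  shows "(A * B) $$ (i,j) = A $$ (i,0) * B $$ (0,j) + A $$ (i,1) * B $$ (1,j)"
  using index_mult_mat_sum[OF assms] by (simp add: numeral_2_eq_2)

lemma pauli1_carrier [simp]: "pauli1 a \<in> carrier_mat 2 2"
  unfolding pauli1_def by simp

lemma pauli1_dims [simp]: "dim_row (pauli1 a) = 2" "dim_col (pauli1 a) = 2"
  unfolding pauli1_def by simp_all

lemma index_pauli1:
  "i < 2 \<Longrightarrow> j < 2 \<Longrightarrow> pauli1 a $$ (i,j) =
     (if a = 1 then (if i \<noteq> j then 1 else 0)
     else if a = 2 then (if i = 0 \<and> j = 1 then - \<i> else if i = 1 \<and> j = 0 then \<i> else 0)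
     else if a = 3 then (if i = j then (if i = 0 then 1 else -1) else 0)
     else (if i = j then 1 else 0))"
  unfolding pauli1_def by simp

definition pauli1_mult_label :: "nat \<Rightarrow> nat \<Rightarrow> nat" where
  "pauli1_mult_label a b = (if a = 0 then b else if b = 0 then a else if a = b then 0 else 6 - a - b)"

definition pauli1_mult_phase :: "nat \<Rightarrow> nat \<Rightarrow> complex" where
  "pauli1_mult_phase a b = (if a = 0 \<or> b = 0 \<or> a = b then 1
     else if (a = 1 \<and> b = 2) \<or> (a = 2 \<and> b = 3) \<or> (a = 3 \<and> b = 1) then \<i> else - \<i>)"

lemma pauli1_mult:
  assumes "a < 4" "b < 4"
  shows "pauli1 a * pauli1 b = pauli1_mult_phase a b \<cdot>\<^sub>m pauli1 (pauli1_mult_label a b)"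
proof -
  have "a = 0 \<or> a = 1 \<or> a = 2 \<or> a = 3" "b = 0 \<or> b = 1 \<or> b = 2 \<or> b = 3" using assms by auto
  then show ?thesis
    by (elim disjE; intro eq_mat2I; simp add: index_mult_mat2 index_pauli1 pauli1_mult_label_def
        pauli1_mult_phase_def mult_carrier_mat[OF pauli1_carrier pauli1_carrier] del: index_mult_mat)
qed

lemma pauli1_mult_label_less: "a < 4 \<Longrightarrow> b < 4 \<Longrightarrow> pauli1_mult_label a b < 4"
  unfolding pauli1_mult_label_def by auto

lemma pauli1_mult_phase_unimodular: "pauli1_mult_phase a b * cnj (pauli1_mult_phase a b) = 1"
  unfolding pauli1_mult_phase_def by auto

lemma adj_pauli1: "adj (pauli1 a) = pauli1 a"
  by (intro eq_mat2I adj_carrier pauli1_carrier) (simp_all add: index_adj index_pauli1)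

lemma pauli1_zero: "pauli1 0 = 1\<^sub>m 2"
  by (intro eq_mat2I) (simp_all add: index_pauli1)

lemma pauli_string_Nil: "pauli_string [] = 1\<^sub>m 1"
  by (simp add: pauli_string_def)

lemma pauli_string_Cons: "pauli_string (a # xs) = kron (pauli1 a) (pauli_string xs)"
  by (simp add: pauli_string_def)

lemma pauli_string_carrier: "pauli_string xs \<in> carrier_mat (2 ^ length xs) (2 ^ length xs)"
  by (induction xs) (auto simp: pauli_string_Nil pauli_string_Cons intro: kron_carrier[OF pauli1_carrier, simplified])

lemma adj_pauli_string: "adj (pauli_string xs) = pauli_string xs"
  by (induction xs) (simp_all add: pauli_string_Nil pauli_string_Cons adj_one adj_kron adj_pauli1)

lemma pauli_string_replicate_zero: "pauli_string (replicate n 0) = 1\<^sub>m (2^n)"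
  by (induction n) (simp_all add: pauli_string_Nil pauli_string_Cons pauli1_zero kron_one)

lemma pauli_string_mult:
  assumes "length xs = length ys" "set xs \<subseteq> {0..<4}" "set ys \<subseteq> {0..<4}"
  shows "\<exists>c zs. c * cnj c = 1 \<and> length zs = length xs \<and> set zs \<subseteq> {0..<4} \<and>
           pauli_string xs * pauli_string ys = c \<cdot>\<^sub>m pauli_string zs"
  using assms
proof (induction xs arbitrary: ys)
  case Nil
  then show ?case by (intro exI[of _ 1] exI[of _ "[]"]) (simp add: pauli_string_Nil one_smult_mat)
next
  case (Cons a xs)
  then obtain b ys' where ys: "ys = b # ys'" by (cases ys) auto
  have a: "a < 4" and b: "b < 4" using Cons.prems ys by auto
  have "length xs = length ys'" "set xs \<subseteq> {0..<4}" "set ys' \<subseteq> {0..<4}" using Cons.prems ys by auto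
  from Cons.IH[OF this] obtain c zs where c: "c * cnj c = 1"
    and zs: "length zs = length xs" "set zs \<subseteq> {0..<4}"
    and eq: "pauli_string xs * pauli_string ys' = c \<cdot>\<^sub>m pauli_string zs" by blast
  have "pauli_string (a # xs) * pauli_string ys = kron (pauli1 a * pauli1 b) (pauli_string xs * pauli_string ys')"
    unfolding ys pauli_string_Cons
    using Cons.prems ys pauli_string_carrier[of ys']
    by (intro kron_mult[OF pauli1_carrier pauli_string_carrier pauli1_carrier]) simp
  also have "\<dots> = (pauli1_mult_phase a b * c) \<cdot>\<^sub>m pauli_string (pauli1_mult_label a b # zs)"
    by (simp add: pauli1_mult[OF a b] eq kron_smult_left kron_smult_right pauli_string_Cons
        smult_smult_mat mult.commute)
  finally show ?case
    using pauli1_mult_label_less[OF a b] pauli1_mult_phase_unimodular[of a b] c zs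
    by (intro exI[of _ "pauli1_mult_phase a b * c"] exI[of _ "pauli1_mult_label a b # zs"])
      (simp add: algebra_simps)
qed

lemma pauli_string_square:
  "set xs \<subseteq> {0..<4} \<Longrightarrow> pauli_string xs * pauli_string xs = 1\<^sub>m (2 ^ length xs)"
proof (induction xs)
  case Nil
  then show ?case by (simp add: pauli_string_Nil)
next
  case (Cons a xs)
  have "pauli_string (a # xs) * pauli_string (a # xs) = kron (pauli1 a * pauli1 a) (pauli_string xs * pauli_string xs)"
    unfolding pauli_string_Cons by (rule kron_mult[OF pauli1_carrier pauli_string_carrier pauli1_carrier pauli_string_carrier])
  also have "\<dots> = 1\<^sub>m (2 ^ length (a # xs))"
    using Cons by (simp add: pauli1_mult pauli1_mult_phase_def pauli1_mult_label_def pauli1_zero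
        one_smult_mat kron_one)
  finally show ?case .
qed

definition pauli_list :: "nat \<Rightarrow> complex mat list" where
  "pauli_list n = map pauli_string (List.n_lists n [0..<4])"

lemma is_pauli_iff_in_pauli_list: "is_pauli n P \<longleftrightarrow> P \<in> set (pauli_list n)"
  unfolding is_pauli_def pauli_list_def by (auto simp: set_n_lists)

lemma is_pauli_hermitian_involution:
  "is_pauli n P \<Longrightarrow> P \<in> carrier_mat (2^n) (2^n) \<and> adj P = P \<and> P * P = 1\<^sub>m (2^n)"
  using pauli_string_carrier pauli_string_square unfolding is_pauli_def
  by (auto simp: adj_pauli_string)

lemma is_pauli_mult:
  assumes "is_pauli n P" "is_pauli n Q"
  shows "\<exists>c R. c * cnj c = 1 \<and> is_pauli n R \<and> P * Q = c \<cdot>\<^sub>m R"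
  using assms pauli_string_mult unfolding is_pauli_def by metis

lemma is_pauli_one: "is_pauli n (1\<^sub>m (2^n))"
  unfolding is_pauli_def by (auto intro!: exI[of _ "replicate n 0"] simp: pauli_string_replicate_zero)

lemma pauli_list_mult_closed:
  assumes "is_pauli n P" and "q < length (pauli_list n)"
  shows "\<exists>q' < length (pauli_list n). \<exists>c. c * cnj c = 1 \<and> P * pauli_list n ! q = c \<cdot>\<^sub>m pauli_list n ! q'"
proof -
  obtain c R where "c * cnj c = 1" "is_pauli n R" "P * pauli_list n ! q = c \<cdot>\<^sub>m R"
    using is_pauli_mult[OF assms(1)] assms(2) nth_mem is_pauli_iff_in_pauli_list by blast
  then show ?thesis by (auto simp: is_pauli_iff_in_pauli_list in_set_conv_nth)
qed

section \<open>The channel applying a unitary selected by the program register\<close>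

definition qform :: "nat \<Rightarrow> (nat \<Rightarrow> nat \<Rightarrow> complex) \<Rightarrow> (nat \<Rightarrow> complex) \<Rightarrow> complex" where
  "qform n E v = (\<Sum>i<n. \<Sum>j<n. cnj (v i) * E i j * v j)"

lemma psd_iff_qform:
  "psd d A \<longleftrightarrow> A \<in> carrier_mat d d \<and>
     (\<forall>v. qform d (\<lambda>i j. A $$ (i,j)) v \<in> \<real> \<and> Re (qform d (\<lambda>i j. A $$ (i,j)) v) \<ge> 0)"
  unfolding psd_def qform_def by simp

lemma qform_sum:
  assumes "\<And>i j. i < n \<Longrightarrow> j < n \<Longrightarrow> E i j = (\<Sum>q\<in>S. F q i j)"
  shows "qform n E v = (\<Sum>q\<in>S. qform n (F q) v)"
  unfolding qform_def using assms
  by (simp add: sum_distrib_left sum_distrib_right sum.swap[of _ S])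

lemma qform_congruence:
  fixes V :: "nat \<Rightarrow> nat \<Rightarrow> complex"
  assumes E: "\<And>i j. i < n \<Longrightarrow> j < n \<Longrightarrow> E i j = (\<Sum>l<p. \<Sum>l'<p. cnj (V l i) * M l l' * V l' j)"
  shows "qform n E v = qform p M (\<lambda>l. \<Sum>j<n. V l j * v j)"
proof -
  have "qform p M (\<lambda>l. \<Sum>j<n. V l j * v j) =
     (\<Sum>l<p. \<Sum>l'<p. (\<Sum>i<n. cnj (V l i) * cnj (v i)) * M l l' * (\<Sum>j<n. V l' j * v j))"
    unfolding qform_def by (simp add: cnj_sum)
  also have "\<dots> = (\<Sum>l<p. \<Sum>l'<p. \<Sum>i<n. \<Sum>j<n. cnj (V l i) * cnj (v i) * M l l' * (V l' j * v j))"
    by (simp only: sum_distrib_right, simp only: sum_distrib_left)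
  also have "\<dots> = (\<Sum>l<p. \<Sum>i<n. \<Sum>l'<p. \<Sum>j<n. cnj (V l i) * cnj (v i) * M l l' * (V l' j * v j))"
    by (rule sum.cong[OF refl], rule sum.swap)
  also have "\<dots> = (\<Sum>l<p. \<Sum>i<n. \<Sum>j<n. \<Sum>l'<p. cnj (V l i) * cnj (v i) * M l l' * (V l' j * v j))"
    by (rule sum.cong[OF refl], rule sum.cong[OF refl], rule sum.swap)
  also have "\<dots> = (\<Sum>i<n. \<Sum>l<p. \<Sum>j<n. \<Sum>l'<p. cnj (V l i) * cnj (v i) * M l l' * (V l' j * v j))"
    by (rule sum.swap)
  also have "\<dots> = (\<Sum>i<n. \<Sum>j<n. \<Sum>l<p. \<Sum>l'<p. cnj (V l i) * cnj (v i) * M l l' * (V l' j * v j))"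
    by (rule sum.cong[OF refl], rule sum.swap)
  also have "\<dots> = qform n E v"
    unfolding qform_def
    by (intro sum.cong refl) (simp add: E sum_distrib_left sum_distrib_right mult_ac)
  finally show ?thesis by simp
qed

text \<open>
  The row index of \<open>\<complex>\<^sup>d \<otimes> \<complex>\<^sup>m\<close> for system index \<open>a\<close> and program index \<open>q\<close> is
  \<open>a * m + q\<close> (see the definition of \<open>kron\<close>); the channel measures the program register and
  applies \<open>U q\<close> on outcome \<open>q\<close>.
\<close>
definition controlled_channel :: "nat \<Rightarrow> nat \<Rightarrow> (nat \<Rightarrow> complex mat) \<Rightarrow> complex mat \<Rightarrow> complex mat" where
  "controlled_channel d m U M = mat d d (\<lambda>(i,j).
     \<Sum>q<m. \<Sum>a<d. \<Sum>b<d. U q $$ (i,a) * M $$ (a*m+q, b*m+q) * cnj (U q $$ (j,b)))"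

lemma controlled_channel_carrier: "controlled_channel d m U M \<in> carrier_mat d d"
  unfolding controlled_channel_def by simp

lemma index_controlled_channel:
  "i < d \<Longrightarrow> j < d \<Longrightarrow> controlled_channel d m U M $$ (i,j) =
     (\<Sum>q<m. \<Sum>a<d. \<Sum>b<d. U q $$ (i,a) * M $$ (a*m+q, b*m+q) * cnj (U q $$ (j,b)))"
  unfolding controlled_channel_def by simp

lemma controlled_channel_add:
  assumes "A \<in> carrier_mat (d*m) (d*m)" "B \<in> carrier_mat (d*m) (d*m)"
  shows "controlled_channel d m U (A + B) = controlled_channel d m U A + controlled_channel d m U B"
proof (rule eq_matI)
  fix i j assume "i < dim_row (controlled_channel d m U A + controlled_channel d m U B)"
    "j < dim_col (controlled_channel d m U A + controlled_channel d m U B)"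
  then have i: "i < d" and j: "j < d" by (simp_all add: controlled_channel_def)
  have "controlled_channel d m U (A + B) $$ (i,j)
      = (\<Sum>q<m. \<Sum>a<d. \<Sum>b<d. U q $$ (i,a) * A $$ (a*m+q, b*m+q) * cnj (U q $$ (j,b))
                           + U q $$ (i,a) * B $$ (a*m+q, b*m+q) * cnj (U q $$ (j,b)))"
    unfolding index_controlled_channel[OF i j] using assms
    by (intro sum.cong refl) (simp add: mult_add_less_mult_nat distrib_left distrib_right)
  then show "controlled_channel d m U (A + B) $$ (i,j)
      = (controlled_channel d m U A + controlled_channel d m U B) $$ (i,j)"
    using i j by (simp add: controlled_channel_def sum.distrib)
qed (simp_all add: controlled_channel_def)

lemma controlled_channel_smult:
  assumes "A \<in> carrier_mat (d*m) (d*m)"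
  shows "controlled_channel d m U (c \<cdot>\<^sub>m A) = c \<cdot>\<^sub>m controlled_channel d m U A"
proof (rule eq_matI)
  fix i j assume "i < dim_row (c \<cdot>\<^sub>m controlled_channel d m U A)"
    "j < dim_col (c \<cdot>\<^sub>m controlled_channel d m U A)"
  then have i: "i < d" and j: "j < d" by (simp_all add: controlled_channel_def)
  have "controlled_channel d m U (c \<cdot>\<^sub>m A) $$ (i,j)
      = (\<Sum>q<m. \<Sum>a<d. \<Sum>b<d. c * (U q $$ (i,a) * A $$ (a*m+q, b*m+q) * cnj (U q $$ (j,b))))"
    unfolding index_controlled_channel[OF i j] using assms
    by (intro sum.cong refl) (simp add: mult_add_less_mult_nat mult_ac)
  then show "controlled_channel d m U (c \<cdot>\<^sub>m A) $$ (i,j) = (c \<cdot>\<^sub>m controlled_channel d m U A) $$ (i,j)"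
    using i j by (simp add: controlled_channel_def sum_distrib_left)
qed (simp_all add: controlled_channel_def)

lemma columns_orthonormal:
  assumes U: "U \<in> carrier_mat d d" "adj U * U = 1\<^sub>m d" and a: "a < d" and b: "b < d"
  shows "(\<Sum>i<d. U $$ (i,a) * cnj (U $$ (i,b))) = (if a = b then 1 else 0)"
proof -
  have "(adj U * U) $$ (b,a) = (\<Sum>i<d. adj U $$ (b,i) * U $$ (i,a))"
    by (rule index_mult_mat_sum[OF adj_carrier[OF U(1)] U(1) b a])
  also have "\<dots> = (\<Sum>i<d. U $$ (i,a) * cnj (U $$ (i,b)))"
    using U(1) b by (intro sum.cong refl) (simp add: index_adj mult.commute)
  finally show ?thesis using U(2) a b by auto
qed

lemma trace_controlled_channel:
  assumes U: "\<And>q. q < m \<Longrightarrow> U q \<in> carrier_mat d d" "\<And>q. q < m \<Longrightarrow> adj (U q) * U q = 1\<^sub>m d"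
    and A: "A \<in> carrier_mat (d*m) (d*m)"
  shows "tr (controlled_channel d m U A) = tr A"
proof -
  have "tr (controlled_channel d m U A)
      = (\<Sum>i<d. \<Sum>q<m. \<Sum>a<d. \<Sum>b<d. U q $$ (i,a) * A $$ (a*m+q, b*m+q) * cnj (U q $$ (i,b)))"
    unfolding tr_def controlled_channel_def by simp
  also have "\<dots> = (\<Sum>q<m. \<Sum>i<d. \<Sum>a<d. \<Sum>b<d. U q $$ (i,a) * A $$ (a*m+q, b*m+q) * cnj (U q $$ (i,b)))"
    by (rule sum.swap)
  also have "\<dots> = (\<Sum>q<m. \<Sum>a<d. \<Sum>i<d. \<Sum>b<d. U q $$ (i,a) * A $$ (a*m+q, b*m+q) * cnj (U q $$ (i,b)))"
    by (rule sum.cong[OF refl], rule sum.swap)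
  also have "\<dots> = (\<Sum>q<m. \<Sum>a<d. \<Sum>b<d. \<Sum>i<d. U q $$ (i,a) * A $$ (a*m+q, b*m+q) * cnj (U q $$ (i,b)))"
    by (rule sum.cong[OF refl], rule sum.cong[OF refl], rule sum.swap)
  also have "\<dots> = (\<Sum>q<m. \<Sum>a<d. \<Sum>b<d. A $$ (a*m+q, b*m+q) * (\<Sum>i<d. U q $$ (i,a) * cnj (U q $$ (i,b))))"
    by (simp add: sum_distrib_left mult_ac)
  also have "\<dots> = (\<Sum>q<m. \<Sum>a<d. A $$ (a*m+q, a*m+q))"
    using U by (intro sum.cong refl) (simp add: columns_orthonormal if_distrib sum.delta cong: if_cong)
  also have "\<dots> = tr A"
    unfolding tr_def using A by (simp add: sum_lessThan_mult_nat sum.swap[of _ "{..<m}"])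
  finally show ?thesis .
qed

text \<open>
  Entries of \<open>(K \<otimes> 1\<^sub>k)\<^sup>\<dagger>\<close>, where \<open>K = U (1\<^sub>d \<otimes> \<langle>q|)\<close> is the Kraus operator of outcome \<open>q\<close>.
\<close>
definition kraus_adj_entry :: "nat \<Rightarrow> nat \<Rightarrow> nat \<Rightarrow> complex mat \<Rightarrow> nat \<Rightarrow> nat \<Rightarrow> complex" where
  "kraus_adj_entry m k q U l i =
     (if (l div k) mod m = q \<and> l mod k = i mod k then cnj (U $$ (i div k, (l div k) div m)) else 0)"

lemma sum_sum_if_eq_and_eq:
  fixes X :: "nat \<Rightarrow> nat \<Rightarrow> 'a::comm_monoid_add"
  assumes "q < m" "s0 < k"
  shows "(\<Sum>q'<m. \<Sum>s<k. if q' = q \<and> s = s0 then X q' s else 0) = X q s0"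
proof -
  have "(\<Sum>s<k. if q' = q \<and> s = s0 then X q' s else 0) = (if q' = q then X q' s0 else 0)" for q'
    using assms(2) by (cases "q' = q") simp_all
  then show ?thesis using assms(1) by simp
qed

lemma sum_mult_kraus_adj_entry:
  assumes q: "q < m" and j: "j < d*k"
  shows "(\<Sum>l<d*m*k. f l * kraus_adj_entry m k q U l j)
       = (\<Sum>b<d. f ((b*m+q)*k + j mod k) * cnj (U $$ (j div k, b)))"
proof -
  have "(\<Sum>l<d*m*k. f l * kraus_adj_entry m k q U l j)
      = (\<Sum>b<d. \<Sum>q'<m. \<Sum>s<k. if q' = q \<and> s = j mod k
           then f ((b*m+q')*k+s) * cnj (U $$ (j div k, b)) else 0)"
    unfolding sum_lessThan_mult3_nat
    by (intro sum.cong refl) (auto simp: kraus_adj_entry_def)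
  also have "\<dots> = (\<Sum>b<d. f ((b*m+q)*k + j mod k) * cnj (U $$ (j div k, b)))"
    using j by (simp add: sum_sum_if_eq_and_eq[OF q] mod_less_of_less_mult)
  finally show ?thesis .
qed

lemma sum_cnj_kraus_adj_entry_mult:
  assumes q: "q < m" and i: "i < d*k"
  shows "(\<Sum>l<d*m*k. cnj (kraus_adj_entry m k q U l i) * g l)
       = (\<Sum>a<d. U $$ (i div k, a) * g ((a*m+q)*k + i mod k))"
proof -
  have "(\<Sum>l<d*m*k. cnj (kraus_adj_entry m k q U l i) * g l)
      = cnj (\<Sum>l<d*m*k. cnj (g l) * kraus_adj_entry m k q U l i)"
    by (simp add: cnj_sum mult.commute)
  also have "\<dots> = (\<Sum>a<d. U $$ (i div k, a) * g ((a*m+q)*k + i mod k))"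
    by (simp only: sum_mult_kraus_adj_entry[OF q i]) (simp add: cnj_sum mult.commute)
  finally show ?thesis .
qed

lemma ext_id_controlled_channel_block:
  assumes q: "q < m" and i: "i < d*k" and j: "j < d*k"
  shows "(\<Sum>a<d. \<Sum>b<d. U $$ (i div k, a) * M ((a*m+q)*k + i mod k) ((b*m+q)*k + j mod k) * cnj (U $$ (j div k, b)))
    = (\<Sum>l<d*m*k. \<Sum>l'<d*m*k. cnj (kraus_adj_entry m k q U l i) * M l l' * kraus_adj_entry m k q U l' j)"
proof -
  have "(\<Sum>l<d*m*k. \<Sum>l'<d*m*k. cnj (kraus_adj_entry m k q U l i) * M l l' * kraus_adj_entry m k q U l' j)
      = (\<Sum>l<d*m*k. cnj (kraus_adj_entry m k q U l i) * (\<Sum>l'<d*m*k. M l l' * kraus_adj_entry m k q U l' j))"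
    by (simp add: sum_distrib_left mult.assoc)
  also have "\<dots> = (\<Sum>a<d. U $$ (i div k, a) *
      (\<Sum>b<d. M ((a*m+q)*k + i mod k) ((b*m+q)*k + j mod k) * cnj (U $$ (j div k, b))))"
    by (simp only: sum_mult_kraus_adj_entry[OF q j] sum_cnj_kraus_adj_entry_mult[OF q i])
  finally show ?thesis
    by (simp add: sum_distrib_left mult.assoc)
qed

lemma ext_id_controlled_channel_psd:
  assumes M: "psd (d*m*k) M"
  shows "psd (d*k) (ext_id (d*m) d k (controlled_channel d m U) M)"
proof -
  define E where "E = ext_id (d*m) d k (controlled_channel d m U) M"
  define V where "V q = kraus_adj_entry m k q (U q)" for q
  have E: "E $$ (i,j) = (\<Sum>q<m. \<Sum>l<d*m*k. \<Sum>l'<d*m*k. cnj (V q l i) * M $$ (l,l') * V q l' j)"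
    if i: "i < d*k" and j: "j < d*k" for i j
    using i j unfolding E_def ext_id_def V_def
    by (simp add: index_controlled_channel less_mult_imp_div_less mult_add_less_mult_nat
        ext_id_controlled_channel_block[symmetric])
  have "qform (d*k) (\<lambda>i j. E $$ (i,j)) v
      = (\<Sum>q<m. qform (d*m*k) (\<lambda>l l'. M $$ (l,l')) (\<lambda>l. \<Sum>j<d*k. V q l j * v j))" for v
    by (simp add: qform_sum[OF E] qform_congruence)
  moreover have "E \<in> carrier_mat (d*k) (d*k)"
    unfolding E_def ext_id_def by simp
  ultimately show ?thesis
    using M unfolding psd_iff_qform E_def[symmetric] by (simp add: sum_nonneg)
qed

lemma cptp_controlled_channel:
  assumes "\<And>q. q < m \<Longrightarrow> U q \<in> carrier_mat d d" "\<And>q. q < m \<Longrightarrow> adj (U q) * U q = 1\<^sub>m d"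
  shows "cptp (d*m) d (controlled_channel d m U)"
  unfolding cptp_def
  by (auto simp: controlled_channel_carrier controlled_channel_add controlled_channel_smult
      trace_controlled_channel[OF assms] intro: ext_id_controlled_channel_psd)

lemma controlled_channel_kron_diag:
  assumes U: "\<And>q. q < m \<Longrightarrow> U q \<in> carrier_mat d d" and \<rho>: "\<rho> \<in> carrier_mat d d"
    and i: "i < d" and j: "j < d"
  shows "controlled_channel d m U (kron \<rho> (mat_diag m p)) $$ (i,j)
       = (\<Sum>q<m. p q * (U q * \<rho> * adj (U q)) $$ (i,j))"
proof -
  have adj_U: "adj (U q) $$ (b,j) = cnj (U q $$ (j,b))" if "q < m" "b < d" for q b
    using carrier_matD[OF U[OF that(1)]] that j by (simp add: index_adj)
  have "controlled_channel d m U (kron \<rho> (mat_diag m p)) $$ (i,j)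
      = (\<Sum>q<m. \<Sum>a<d. \<Sum>b<d. p q * (U q $$ (i,a) * \<rho> $$ (a,b) * adj (U q) $$ (b,j)))"
    unfolding index_controlled_channel[OF i j] using U \<rho> j
    by (intro sum.cong refl) (simp add: index_kron mult_add_less_mult_nat mat_diag_def adj_U)
  also have "\<dots> = (\<Sum>q<m. p q * (U q * \<rho> * adj (U q)) $$ (i,j))"
    using U \<rho> i j
    by (intro sum.cong refl) (simp add: index_mult_mat3[OF _ \<rho> adj_carrier] sum_distrib_left del: index_mult_mat)
  finally show ?thesis .
qed

lemma density_mat_diag:
  assumes "\<And>q. q < m \<Longrightarrow> p q \<ge> 0" and "(\<Sum>q<m. p q) = 1"
  shows "density m (mat_diag m (\<lambda>q. complex_of_real (p q)))"
proof -
  have "qform m (\<lambda>i j. mat_diag m (\<lambda>q. complex_of_real (p q)) $$ (i,j)) v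
      = of_real (\<Sum>i<m. p i * (cmod (v i))\<^sup>2)" for v
    unfolding qform_def of_real_sum
    by (intro sum.cong refl) (simp add: mat_diag_def if_distrib if_distribR sum.delta complex_norm_square[unfolded of_real_power] mult_ac
        cong: if_cong)
  then have "psd m (mat_diag m (\<lambda>q. complex_of_real (p q)))"
    unfolding psd_iff_qform using assms(1) by (auto intro!: sum_nonneg)
  moreover have "tr (mat_diag m (\<lambda>q. complex_of_real (p q))) = 1"
    using assms(2) unfolding tr_def by (simp add: mat_diag_def flip: of_real_sum)
  ultimately show ?thesis unfolding density_def by simp
qed

lemma quantum_programmable_random_unitary:
  fixes w :: "nat \<Rightarrow> real \<Rightarrow> real"
  assumes U: "\<And>q. q < m \<Longrightarrow> U q \<in> carrier_mat d d" "\<And>q. q < m \<Longrightarrow> adj (U q) * U q = 1\<^sub>m d"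
    and w_nonneg: "\<And>q t. q < m \<Longrightarrow> t \<ge> 0 \<Longrightarrow> w q t \<ge> 0"
    and w_sum: "\<And>t. t \<ge> 0 \<Longrightarrow> (\<Sum>q<m. w q t) = 1"
    and w_cont: "\<And>q. q < m \<Longrightarrow> continuous_on {0..} (w q)"
    and mixture: "\<And>t \<rho> i j. t \<ge> 0 \<Longrightarrow> \<rho> \<in> carrier_mat d d \<Longrightarrow> i < d \<Longrightarrow> j < d \<Longrightarrow>
       exp_super d L t \<rho> $$ (i,j) = (\<Sum>q<m. of_real (w q t) * (U q * \<rho> * adj (U q)) $$ (i,j))"
  shows "quantum_programmable d L"
proof -
  define \<pi> where "\<pi> t = mat_diag m (\<lambda>q. complex_of_real (w q t))" for t
  have "density m (\<pi> t)" if "t \<ge> 0" for t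
    unfolding \<pi>_def using that by (intro density_mat_diag w_nonneg w_sum)
  moreover have "continuous_on {0..} (\<lambda>t. \<pi> t $$ (i,j))" if "i < m" "j < m" for i j
    using that w_cont by (cases "i = j") (simp_all add: \<pi>_def mat_diag_def continuous_on_of_real)
  moreover have "controlled_channel d m U (kron \<rho> (\<pi> t)) = exp_super d L t \<rho>"
    if t: "t \<ge> 0" and \<rho>: "\<rho> \<in> carrier_mat d d" for t \<rho>
  proof (rule eq_matI)
    fix i j assume "i < dim_row (exp_super d L t \<rho>)" "j < dim_col (exp_super d L t \<rho>)"
    then have i: "i < d" and j: "j < d" by (simp_all add: exp_super_def)
    have "controlled_channel d m U (kron \<rho> (\<pi> t)) $$ (i,j)
        = (\<Sum>q<m. complex_of_real (w q t) * (U q * \<rho> * adj (U q)) $$ (i,j))"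
      unfolding \<pi>_def by (rule controlled_channel_kron_diag[OF U(1) \<rho> i j])
    then show "controlled_channel d m U (kron \<rho> (\<pi> t)) $$ (i,j) = exp_super d L t \<rho> $$ (i,j)"
      by (simp only: mixture[OF t \<rho> i j])
  qed (simp_all add: exp_super_def controlled_channel_def)
  ultimately show ?thesis
    unfolding quantum_programmable_def using cptp_controlled_channel[OF U]
    by (intro exI[of _ m] exI[of _ "controlled_channel d m U"] exI[of _ \<pi>]) simp
qed
section \<open>Exponential series and a continuous-time Markov chain\<close>

lemma summable_exp_abs: "summable (\<lambda>n. \<bar>x\<bar>^n / fact n :: real)"
  using summable_exp[of "\<bar>x\<bar>"] by (simp add: divide_inverse mult.commute)

lemma summable_norm_exp_bounded_coeffs:
  fixes c :: "nat \<Rightarrow> real"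
  assumes c: "\<And>l. 0 \<le> c l \<and> c l \<le> G^l"
  shows "summable (\<lambda>l. norm (c l / fact l * y^l))"
proof (rule summable_comparison_test'[OF summable_exp_abs[of "G * y"], of 0])
  fix n :: nat
  have G: "G \<ge> 0" using c[of 1] by simp
  have "norm (norm (c n / fact n * y^n)) = c n * \<bar>y\<bar>^n / fact n"
    using c[of n] by (simp add: abs_mult power_abs)
  also have "\<dots> \<le> G^n * \<bar>y\<bar>^n / fact n"
    using c[of n] by (intro divide_right_mono mult_right_mono) auto
  also have "\<dots> = \<bar>G * y\<bar>^n / fact n" using G by (simp add: abs_mult power_mult_distrib)
  finally show "norm (norm (c n / fact n * y^n)) \<le> \<bar>G * y\<bar>^n / fact n" .
qed

lemma exp_cauchy_product_coeff:
  fixes t G :: real and c :: "nat \<Rightarrow> real"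
  assumes l: "l \<le> k"
  shows "(- G * t)^(k-l) / fact (k-l) * (c l / fact l * t^l)
       = t^k / fact k * (real (k choose l) * (-G)^(k-l) * c l)"
proof -
  have ch: "real (k choose l) / fact k = 1 / (fact l * fact (k - l))"
    using l by (simp add: binomial_fact)
  have tk: "t^k = t^(k-l) * t^l" using l by (simp add: power_add[symmetric])
  have "t^k / fact k * (real (k choose l) * (-G)^(k-l) * c l)
      = (t^k * (-G)^(k-l) * c l) * (real (k choose l) / fact k)"
    by simp
  also have "\<dots> = (t^k * (-G)^(k-l) * c l) / (fact l * fact (k - l))"
    unfolding ch by simp
  also have "\<dots> = (- G * t)^(k-l) / fact (k-l) * (c l / fact l * t^l)"
    unfolding tk power_mult_distrib by (simp add: mult_ac)
  finally show ?thesis by simp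
qed

lemma sums_exp_mult_series:
  fixes c :: "nat \<Rightarrow> real"
  assumes c: "\<And>l. 0 \<le> c l \<and> c l \<le> G^l"
  shows "(\<lambda>k. t^k / fact k * (\<Sum>l\<le>k. real (k choose l) * (-G)^(k-l) * c l))
           sums (exp (- G * t) * (\<Sum>l. c l / fact l * t^l))"
proof -
  define a where "a k = (- G * t)^k / fact k" for k
  define b where "b l = c l / fact l * t^l" for l
  have "(\<lambda>k. \<Sum>i\<le>k. a i * b (k - i)) sums ((\<Sum>k. a k) * (\<Sum>k. b k))"
  proof (rule Cauchy_product_sums)
    show "summable (\<lambda>k. norm (a k))"
      unfolding a_def using summable_exp_abs[of "- G * t"] by (simp add: power_abs)
    show "summable (\<lambda>k. norm (b k))"
      unfolding b_def by (rule summable_norm_exp_bounded_coeffs[OF c])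
  qed
  moreover have "(\<Sum>k. a k) = exp (- G * t)"
    using exp_converges[of "- G * t"] unfolding a_def by (simp add: sums_iff divide_inverse mult.commute)
  moreover have "(\<Sum>i\<le>k. a i * b (k - i)) = t^k / fact k * (\<Sum>l\<le>k. real (k choose l) * (-G)^(k-l) * c l)" for k
  proof -
    have "(\<Sum>i\<le>k. a i * b (k - i)) = (\<Sum>l\<le>k. a (k - l) * b l)"
      using sum.atLeastAtMost_rev[of "\<lambda>i. a i * b (k - i)" 0 k] by (simp add: atLeast0AtMost)
    also have "\<dots> = (\<Sum>l\<le>k. t^k / fact k * (real (k choose l) * (-G)^(k-l) * c l))"
      unfolding a_def b_def by (intro sum.cong refl exp_cauchy_product_coeff) simp
    finally show ?thesis
      by (simp add: sum_distrib_left)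
  qed
  ultimately show ?thesis
    unfolding b_def by simp
qed

lemma sum_binomial_pascal:
  fixes c :: "nat \<Rightarrow> real" and a :: real
  shows "(\<Sum>l\<le>k. real (k choose l) * a^(k-l) * c (Suc l)) + a * (\<Sum>l\<le>k. real (k choose l) * a^(k-l) * c l)
       = (\<Sum>l\<le>Suc k. real (Suc k choose l) * a^(Suc k - l) * c l)"
proof -
  have "(\<Sum>l\<le>Suc k. real (Suc k choose l) * a^(Suc k - l) * c l)
      = a^(Suc k) * c 0 + (\<Sum>l\<le>k. real (Suc k choose Suc l) * a^(k - l) * c (Suc l))"
    by (subst sum.atMost_Suc_shift) simp
  also have "(\<Sum>l\<le>k. real (Suc k choose Suc l) * a^(k - l) * c (Suc l))
      = (\<Sum>l\<le>k. real (k choose l) * a^(k-l) * c (Suc l)) + (\<Sum>l\<le>k. real (k choose Suc l) * a^(k - l) * c (Suc l))"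
    by (simp add: sum.distrib[symmetric] algebra_simps)
  also have "(\<Sum>l\<le>k. real (k choose Suc l) * a^(k - l) * c (Suc l))
      = (\<Sum>l\<le>Suc k. real (k choose l) * a^(Suc k - l) * c l) - a^(Suc k) * c 0"
    by (subst sum.atMost_Suc_shift) simp
  also have "(\<Sum>l\<le>Suc k. real (k choose l) * a^(Suc k - l) * c l) = a * (\<Sum>l\<le>k. real (k choose l) * a^(k-l) * c l)"
    by (simp add: sum_distrib_left Suc_diff_le mult_ac)
  finally show ?thesis by simp
qed

text \<open>
  The chain on the states \<open>q < m\<close> jumps from \<open>q\<close> to \<open>hop i q\<close> at rate \<open>rate i\<close>;
  \<open>generator\<close> is its rate matrix acting on distributions, and \<open>weight \<delta> q t\<close> is the
  \<open>q\<close>-th entry of \<open>e\<^bsup>t generator\<^esup> \<delta> = e\<^bsup>-t total_rate\<^esup> e\<^bsup>t transfer\<^esup> \<delta>\<close>.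
\<close>
locale jump_chain =
  fixes J m :: nat and rate :: "nat \<Rightarrow> real" and hop :: "nat \<Rightarrow> nat \<Rightarrow> nat"
  assumes rate_nonneg: "\<And>i. i < J \<Longrightarrow> rate i \<ge> 0"
    and hop_less: "\<And>i q. i < J \<Longrightarrow> q < m \<Longrightarrow> hop i q < m"
begin

definition total_rate :: real where
  "total_rate = (\<Sum>i<J. rate i)"

definition transfer :: "(nat \<Rightarrow> real) \<Rightarrow> nat \<Rightarrow> real" where
  "transfer f q = (\<Sum>i<J. rate i * (\<Sum>q'\<in>{q'\<in>{..<m}. hop i q' = q}. f q'))"

definition generator :: "(nat \<Rightarrow> real) \<Rightarrow> nat \<Rightarrow> real" where
  "generator f q = transfer f q - total_rate * f q"

definition weight :: "(nat \<Rightarrow> real) \<Rightarrow> nat \<Rightarrow> real \<Rightarrow> real" where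
  "weight \<delta> q t = exp (- total_rate * t) * (\<Sum>l. (transfer ^^ l) \<delta> q / fact l * t^l)"

lemma transfer_sum:
  "transfer (\<lambda>q. \<Sum>x\<in>S. \<alpha> x * f x q) q = (\<Sum>x\<in>S. \<alpha> x * transfer (f x) q)"
  unfolding transfer_def by (simp add: sum_distrib_left sum.swap[of _ S] mult_ac)

lemma sum_transfer: "(\<Sum>q<m. transfer f q) = total_rate * (\<Sum>q<m. f q)"
proof -
  have "(\<Sum>q<m. transfer f q) = (\<Sum>i<J. rate i * (\<Sum>q<m. \<Sum>q'\<in>{q'\<in>{..<m}. hop i q' = q}. f q'))"
    unfolding transfer_def by (simp add: sum_distrib_left sum.swap[of _ "{..<m}"])
  also have "\<dots> = (\<Sum>i<J. rate i * (\<Sum>q<m. f q))"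
    using hop_less by (intro sum.cong refl) (subst sum.group, auto)
  finally show ?thesis by (simp add: total_rate_def sum_distrib_right)
qed

lemma transfer_nonneg: "(\<And>q. f q \<ge> 0) \<Longrightarrow> transfer f q \<ge> 0"
  unfolding transfer_def using rate_nonneg by (intro sum_nonneg mult_nonneg_nonneg) auto

lemma transfer_funpow_distribution:
  assumes "\<And>q. \<delta> q \<ge> 0" and "(\<Sum>q<m. \<delta> q) = 1"
  shows "(\<forall>q. (transfer ^^ l) \<delta> q \<ge> 0) \<and> (\<Sum>q<m. (transfer ^^ l) \<delta> q) = total_rate ^ l"
  by (induction l) (simp_all add: assms transfer_nonneg sum_transfer)

lemma transfer_funpow_bounds:
  assumes "\<And>q. \<delta> q \<ge> 0" and "(\<Sum>q<m. \<delta> q) = 1" and "q < m"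
  shows "0 \<le> (transfer ^^ l) \<delta> q \<and> (transfer ^^ l) \<delta> q \<le> total_rate ^ l"
proof -
  have "(transfer ^^ l) \<delta> q \<le> (\<Sum>q<m. (transfer ^^ l) \<delta> q)"
    using transfer_funpow_distribution[OF assms(1,2)] assms(3) by (intro member_le_sum) auto
  then show ?thesis using transfer_funpow_distribution[OF assms(1,2)] by simp
qed

lemma generator_funpow_binomial:
  "(generator ^^ k) \<delta> q = (\<Sum>l\<le>k. real (k choose l) * (- total_rate)^(k-l) * (transfer ^^ l) \<delta> q)"
proof (induction k arbitrary: q)
  case 0
  then show ?case by simp
next
  case (Suc k)
  have IH: "(generator ^^ k) \<delta> = (\<lambda>q. \<Sum>l\<le>k. real (k choose l) * (- total_rate)^(k-l) * (transfer ^^ l) \<delta> q)"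
    using Suc.IH by (rule ext)
  have "(generator ^^ Suc k) \<delta> q
      = (\<Sum>l\<le>k. real (k choose l) * (- total_rate)^(k-l) * (transfer ^^ Suc l) \<delta> q)
        + (- total_rate) * (\<Sum>l\<le>k. real (k choose l) * (- total_rate)^(k-l) * (transfer ^^ l) \<delta> q)"
    by (simp only: funpow.simps(2) o_apply generator_def IH transfer_sum)
  also have "\<dots> = (\<Sum>l\<le>Suc k. real (Suc k choose l) * (- total_rate)^(Suc k - l) * (transfer ^^ l) \<delta> q)"
    by (rule sum_binomial_pascal[of k "- total_rate" "\<lambda>l. (transfer ^^ l) \<delta> q"])
  finally show ?case .
qed

context
  fixes \<delta> :: "nat \<Rightarrow> real"
  assumes \<delta>_nonneg: "\<And>q. \<delta> q \<ge> 0" and \<delta>_sum: "(\<Sum>q<m. \<delta> q) = 1"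
begin

lemma generator_funpow_sums_weight:
  "q < m \<Longrightarrow> (\<lambda>k. t^k / fact k * (generator ^^ k) \<delta> q) sums weight \<delta> q t"
  unfolding generator_funpow_binomial weight_def
  by (rule sums_exp_mult_series[OF transfer_funpow_bounds[OF \<delta>_nonneg \<delta>_sum]])

lemma weight_nonneg:
  assumes "q < m" and "t \<ge> 0"
  shows "weight \<delta> q t \<ge> 0"
proof -
  note bounds = transfer_funpow_bounds[OF \<delta>_nonneg \<delta>_sum assms(1)]
  have "summable (\<lambda>l. (transfer ^^ l) \<delta> q / fact l * t^l)"
    by (rule summable_norm_cancel[OF summable_norm_exp_bounded_coeffs[OF bounds]])
  then have "(\<Sum>l. (transfer ^^ l) \<delta> q / fact l * t^l) \<ge> 0"
    by (rule suminf_nonneg) (use bounds assms(2) in auto)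
  then show ?thesis unfolding weight_def by simp
qed

lemma isCont_weight:
  assumes "q < m"
  shows "isCont (weight \<delta> q) t"
proof -
  note bounds = transfer_funpow_bounds[OF \<delta>_nonneg \<delta>_sum assms]
  have "isCont (\<lambda>x. \<Sum>l. (transfer ^^ l) \<delta> q / fact l * x^l) t"
    by (rule isCont_powser_converges_everywhere)
      (rule summable_norm_cancel[OF summable_norm_exp_bounded_coeffs[OF bounds]])
  then show ?thesis
    unfolding weight_def[abs_def] by (intro continuous_intros)
qed

lemma sum_weight: "(\<Sum>q<m. weight \<delta> q t) = 1"
proof -
  have "(\<Sum>q<m. \<Sum>l. (transfer ^^ l) \<delta> q / fact l * t^l) = (\<Sum>l. \<Sum>q<m. (transfer ^^ l) \<delta> q / fact l * t^l)"
    by (rule suminf_sum[symmetric], rule summable_norm_cancel,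
        rule summable_norm_exp_bounded_coeffs[OF transfer_funpow_bounds[OF \<delta>_nonneg \<delta>_sum]]) simp
  also have "\<dots> = (\<Sum>l. (total_rate * t)^l / fact l)"
    using transfer_funpow_distribution[OF \<delta>_nonneg \<delta>_sum]
    by (simp add: sum_divide_distrib[symmetric] sum_distrib_right[symmetric] power_mult_distrib)
  also have "\<dots> = exp (total_rate * t)"
    using exp_converges[of "total_rate * t"] by (simp add: sums_iff divide_inverse mult.commute)
  finally show ?thesis
    unfolding weight_def by (simp add: sum_distrib_left[symmetric] exp_add[symmetric])
qed

end

end

section \<open>Lindbladians whose jumps permute a family of conjugations\<close>

lemma lindblad_carrier: "lindblad d jumps X \<in> carrier_mat d d"
  unfolding lindblad_def by simp

lemma index_lindblad_hermitian_involutions: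
  assumes X: "X \<in> carrier_mat d d" and a: "a < d" and b: "b < d"
    and jumps: "\<And>g P. (g,P) \<in> set jumps \<Longrightarrow> P \<in> carrier_mat d d \<and> adj P = P \<and> P * P = 1\<^sub>m d"
  shows "lindblad d jumps X $$ (a,b) = (\<Sum>i<length jumps.
           of_real (fst (jumps!i)) * ((snd (jumps!i) * X * snd (jumps!i)) $$ (a,b) - X $$ (a,b)))"
proof -
  have "lindblad d jumps X $$ (a,b) = (\<Sum>i<length jumps. (\<lambda>(g,L). complex_of_real g *
        (L * X * adj L - (1/2) \<cdot>\<^sub>m (adj L * L * X + X * (adj L * L))) $$ (a,b)) (jumps!i))"
    unfolding lindblad_def using a b by (simp add: sum_list_sum_nth atLeast0LessThan)
  also have "\<dots> = (\<Sum>i<length jumps.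
      of_real (fst (jumps!i)) * ((snd (jumps!i) * X * snd (jumps!i)) $$ (a,b) - X $$ (a,b)))"
  proof (rule sum.cong[OF refl])
    fix i assume "i \<in> {..<length jumps}"
    moreover obtain g L where gL: "jumps!i = (g,L)" by (cases "jumps!i")
    ultimately have L: "L \<in> carrier_mat d d" "adj L = L" "L * L = 1\<^sub>m d"
      using jumps nth_mem by fastforce+
    then show "(\<lambda>(g,L). complex_of_real g * (L * X * adj L - (1/2) \<cdot>\<^sub>m (adj L * L * X + X * (adj L * L))) $$ (a,b)) (jumps!i)
        = of_real (fst (jumps!i)) * ((snd (jumps!i) * X * snd (jumps!i)) $$ (a,b) - X $$ (a,b))"
      using gL X a b by (simp add: carrier_matD)
  qed
  finally show ?thesis .
qed

lemma sandwich_mult_phase: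
  fixes P Q Q' \<rho> :: "complex mat"
  assumes P: "P \<in> carrier_mat d d" and Q: "Q \<in> carrier_mat d d" and Q': "Q' \<in> carrier_mat d d"
    and \<rho>: "\<rho> \<in> carrier_mat d d"
    and "adj P = P" "adj Q = Q" "adj Q' = Q'" and c: "c * cnj c = 1" and PQ: "P * Q = c \<cdot>\<^sub>m Q'"
  shows "P * (Q * \<rho> * Q) * P = Q' * \<rho> * Q'"
proof -
  have QP: "Q * P = cnj c \<cdot>\<^sub>m Q'"
    using adj_mult[OF P Q] PQ assms(5-7) by (simp add: adj_smult)
  have "P * (Q * \<rho> * Q) * P = (P * Q) * \<rho> * (Q * P)"
    using P Q \<rho> by (simp add: assoc_mult_mat[of _ d d _ d _ d])
  also have "\<dots> = (c * cnj c) \<cdot>\<^sub>m (Q' * \<rho> * Q')"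
    unfolding PQ QP using Q' \<rho>
    by (simp add: mult_smult_assoc_mat[of _ d d _ d] mult_smult_distrib[of _ d d _ d] smult_smult_mat mult.commute)
  finally show ?thesis using c by (simp add: one_smult_mat)
qed

lemma index_sandwich_sum:
  fixes P X :: "complex mat" and Y :: "'b \<Rightarrow> complex mat"
  assumes P: "P \<in> carrier_mat d d" and X: "X \<in> carrier_mat d d" and a: "a < d" and b: "b < d"
    and Y: "\<And>q. q \<in> S \<Longrightarrow> Y q \<in> carrier_mat d d"
    and XY: "\<And>x y. x < d \<Longrightarrow> y < d \<Longrightarrow> X $$ (x,y) = (\<Sum>q\<in>S. \<alpha> q * Y q $$ (x,y))"
  shows "(P * X * P) $$ (a,b) = (\<Sum>q\<in>S. \<alpha> q * (P * Y q * P) $$ (a,b))"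
proof -
  have "(P * X * P) $$ (a,b) = (\<Sum>x<d. \<Sum>y<d. \<Sum>q\<in>S. \<alpha> q * (P $$ (a,x) * Y q $$ (x,y) * P $$ (y,b)))"
    unfolding index_mult_mat3[OF P X P a b]
    by (intro sum.cong refl) (simp add: XY sum_distrib_left sum_distrib_right mult_ac)
  also have "\<dots> = (\<Sum>q\<in>S. \<alpha> q * (\<Sum>x<d. \<Sum>y<d. P $$ (a,x) * Y q $$ (x,y) * P $$ (y,b)))"
    by (simp add: sum_distrib_left sum.swap[of _ S])
  also have "\<dots> = (\<Sum>q\<in>S. \<alpha> q * (P * Y q * P) $$ (a,b))"
    by (intro sum.cong refl) (simp add: index_mult_mat3[OF P Y P a b])
  finally show ?thesis .
qed

lemma sum_mult_comp_eq_sum_fibres: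
  fixes f :: "nat \<Rightarrow> 'a::comm_ring_1"
  assumes "\<And>q. q < m \<Longrightarrow> g q < m"
  shows "(\<Sum>q<m. f q * A (g q)) = (\<Sum>q<m. (\<Sum>q'\<in>{q'\<in>{..<m}. g q' = q}. f q') * A q)"
proof -
  have "(\<Sum>q<m. (\<Sum>q'\<in>{q'\<in>{..<m}. g q' = q}. f q') * A q)
      = (\<Sum>q<m. (\<Sum>q'\<in>{q'\<in>{..<m}. g q' = q}. f q' * A (g q')))"
    by (intro sum.cong refl) (simp add: sum_distrib_right)
  also have "\<dots> = (\<Sum>q<m. f q * A (g q))"
    by (rule sum.group) (use assms in auto)
  finally show ?thesis by simp
qed

lemma (in jump_chain) dissipator_mixture:
  fixes P A :: "nat \<Rightarrow> complex mat"
  assumes P: "\<And>i. i < J \<Longrightarrow> P i \<in> carrier_mat d d"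
    and A: "\<And>q. q < m \<Longrightarrow> A q \<in> carrier_mat d d"
    and hop: "\<And>i q. i < J \<Longrightarrow> q < m \<Longrightarrow> P i * A q * P i = A (hop i q)"
    and X: "X \<in> carrier_mat d d"
    and X_entry: "\<And>a b. a < d \<Longrightarrow> b < d \<Longrightarrow> X $$ (a,b) = (\<Sum>q<m. of_real (f q) * A q $$ (a,b))"
    and a: "a < d" and b: "b < d"
  shows "(\<Sum>i<J. of_real (rate i) * ((P i * X * P i) $$ (a,b) - X $$ (a,b)))
       = (\<Sum>q<m. of_real (generator f q) * A q $$ (a,b))"
proof -
  have conj: "(P i * X * P i) $$ (a,b)
      = (\<Sum>q<m. (\<Sum>q'\<in>{q'\<in>{..<m}. hop i q' = q}. of_real (f q')) * A q $$ (a,b))" if i: "i < J" for i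
  proof -
    have "(P i * X * P i) $$ (a,b) = (\<Sum>q<m. of_real (f q) * A (hop i q) $$ (a,b))"
      using index_sandwich_sum[OF P[OF i] X a b, of "{..<m}" A] A X_entry hop[OF i] by simp
    also have "\<dots> = (\<Sum>q<m. (\<Sum>q'\<in>{q'\<in>{..<m}. hop i q' = q}. of_real (f q')) * A q $$ (a,b))"
      using sum_mult_comp_eq_sum_fibres[of m "hop i" "\<lambda>q. of_real (f q) :: complex" "\<lambda>q. A q $$ (a,b)"]
        hop_less[OF i] by simp
    finally show ?thesis .
  qed
  have "(\<Sum>i<J. of_real (rate i) * ((P i * X * P i) $$ (a,b) - X $$ (a,b)))
      = (\<Sum>q<m. of_real (transfer f q) * A q $$ (a,b)) - of_real total_rate * (\<Sum>q<m. of_real (f q) * A q $$ (a,b))"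
    by (simp add: conj X_entry[OF a b] transfer_def total_rate_def right_diff_distrib sum_subtractf
        sum_distrib_left sum_distrib_right sum.swap[of _ "{..<J}"] mult.assoc)
  then show ?thesis
    by (simp add: generator_def sum_distrib_left sum_subtractf left_diff_distrib mult.assoc)
qed

lemma index_exp_super_mixture:
  fixes c :: "nat \<Rightarrow> nat \<Rightarrow> real" and A :: "nat \<Rightarrow> complex mat"
  assumes powers: "\<And>k. (L ^^ k) \<rho> $$ (a,b) = (\<Sum>q<m. of_real (c k q) * A q $$ (a,b))"
    and sums: "\<And>q. q < m \<Longrightarrow> (\<lambda>k. t^k / fact k * c k q) sums w q"
    and "a < d" "b < d"
  shows "exp_super d L t \<rho> $$ (a,b) = (\<Sum>q<m. of_real (w q) * A q $$ (a,b))"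
proof -
  have sums': "(\<lambda>k. of_real (t^k / fact k * c k q) * A q $$ (a,b)) sums (of_real (w q) * A q $$ (a,b))"
    if "q < m" for q
    by (rule sums_mult2[OF sums_of_real[OF sums[OF that]]])
  have "exp_super d L t \<rho> $$ (a,b) = (\<Sum>k. \<Sum>q<m. of_real (t^k / fact k * c k q) * A q $$ (a,b))"
    unfolding exp_super_def using assms(3,4) by (simp add: powers sum_distrib_left sum_divide_distrib mult.assoc)
  also have "\<dots> = (\<Sum>q<m. \<Sum>k. of_real (t^k / fact k * c k q) * A q $$ (a,b))"
    by (rule suminf_sum) (use sums' sums_summable in auto)
  also have "\<dots> = (\<Sum>q<m. of_real (w q) * A q $$ (a,b))"
    using sums' by (intro sum.cong refl) (simp add: sums_iff)
  finally show ?thesis .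
qed

locale lindblad_conj_family = jump_chain "length jumps" m "\<lambda>i. fst (jumps ! i)" hop
  for jumps :: "(real \<times> complex mat) list" and m :: nat and hop +
  fixes d :: nat and Q :: "nat \<Rightarrow> complex mat"
  assumes jumps_hermitian_involution:
      "\<And>g P. (g,P) \<in> set jumps \<Longrightarrow> P \<in> carrier_mat d d \<and> adj P = P \<and> P * P = 1\<^sub>m d"
    and Q_hermitian: "\<And>q. q < m \<Longrightarrow> Q q \<in> carrier_mat d d \<and> adj (Q q) = Q q"
    and jump_mult_Q: "\<And>i q. i < length jumps \<Longrightarrow> q < m \<Longrightarrow>
      \<exists>c. c * cnj c = 1 \<and> snd (jumps ! i) * Q q = c \<cdot>\<^sub>m Q (hop i q)"
begin

lemma jump_hermitian_involution:
  "i < length jumps \<Longrightarrow> snd (jumps ! i) \<in> carrier_mat d d \<and> adj (snd (jumps ! i)) = snd (jumps ! i)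
     \<and> snd (jumps ! i) * snd (jumps ! i) = 1\<^sub>m d"
  using jumps_hermitian_involution[of "fst (jumps ! i)" "snd (jumps ! i)"] by simp

lemma jump_sandwich:
  assumes i: "i < length jumps" and q: "q < m" and \<rho>: "\<rho> \<in> carrier_mat d d"
  shows "snd (jumps ! i) * (Q q * \<rho> * Q q) * snd (jumps ! i) = Q (hop i q) * \<rho> * Q (hop i q)"
proof -
  obtain c where "c * cnj c = 1" "snd (jumps ! i) * Q q = c \<cdot>\<^sub>m Q (hop i q)"
    using jump_mult_Q[OF i q] by blast
  then show ?thesis
    using jump_hermitian_involution[OF i] Q_hermitian[OF q] Q_hermitian[OF hop_less[OF i q]] \<rho>
    by (intro sandwich_mult_phase) auto
qed

lemma lindblad_funpow_mixture:
  assumes \<rho>: "\<rho> \<in> carrier_mat d d" and X: "X \<in> carrier_mat d d"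
    and X_entry: "\<And>a b. a < d \<Longrightarrow> b < d \<Longrightarrow> X $$ (a,b) = (\<Sum>q<m. of_real (f q) * (Q q * \<rho> * Q q) $$ (a,b))"
  shows "(lindblad d jumps ^^ k) X \<in> carrier_mat d d \<and> (\<forall>a<d. \<forall>b<d.
    (lindblad d jumps ^^ k) X $$ (a,b) = (\<Sum>q<m. of_real ((generator ^^ k) f q) * (Q q * \<rho> * Q q) $$ (a,b)))"
proof (induction k)
  case 0
  then show ?case using X X_entry by simp
next
  case (Suc k)
  define Y where "Y = (lindblad d jumps ^^ k) X"
  have Y: "Y \<in> carrier_mat d d"
    and Y_entry: "\<And>a b. a < d \<Longrightarrow> b < d \<Longrightarrow>
      Y $$ (a,b) = (\<Sum>q<m. of_real ((generator ^^ k) f q) * (Q q * \<rho> * Q q) $$ (a,b))"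
    using Suc.IH by (simp_all add: Y_def)
  have sandwich_carrier: "Q q * \<rho> * Q q \<in> carrier_mat d d" if "q < m" for q
    using Q_hermitian[OF that] \<rho> mult_carrier_mat by blast
  have "lindblad d jumps Y $$ (a,b)
      = (\<Sum>q<m. of_real (generator ((generator ^^ k) f) q) * (Q q * \<rho> * Q q) $$ (a,b))"
    if ab: "a < d" "b < d" for a b
  proof -
    have "lindblad d jumps Y $$ (a,b) = (\<Sum>i<length jumps.
        of_real (fst (jumps!i)) * ((snd (jumps!i) * Y * snd (jumps!i)) $$ (a,b) - Y $$ (a,b)))"
      by (rule index_lindblad_hermitian_involutions[OF Y ab jumps_hermitian_involution])
    also have "\<dots> = (\<Sum>q<m. of_real (generator ((generator ^^ k) f) q) * (Q q * \<rho> * Q q) $$ (a,b))"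
      using Y Y_entry sandwich_carrier jump_hermitian_involution jump_sandwich \<rho> ab
      by (intro dissipator_mixture[where P = "\<lambda>i. snd (jumps ! i)" and A = "\<lambda>q. Q q * \<rho> * Q q"]) auto
    finally show ?thesis .
  qed
  then show ?case
    by (simp add: Y_def lindblad_carrier)
qed

lemma exp_super_lindblad_mixture:
  assumes q0: "q0 < m" "Q q0 = 1\<^sub>m d" and \<rho>: "\<rho> \<in> carrier_mat d d" and "a < d" "b < d"
  shows "exp_super d (lindblad d jumps) t \<rho> $$ (a,b)
       = (\<Sum>q<m. of_real (weight (\<lambda>q. if q = q0 then 1 else 0) q t) * (Q q * \<rho> * Q q) $$ (a,b))"
proof (rule index_exp_super_mixture[OF _ _ assms(4,5)])
  have "\<rho> $$ (a,b) = (\<Sum>q<m. of_real (if q = q0 then 1 else 0) * (Q q * \<rho> * Q q) $$ (a,b))" for a b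
    using q0 \<rho> by (simp add: if_distrib if_distribR sum.delta cong: if_cong)
  then show "(lindblad d jumps ^^ k) \<rho> $$ (a,b)
      = (\<Sum>q<m. of_real ((generator ^^ k) (\<lambda>q. if q = q0 then 1 else 0) q) * (Q q * \<rho> * Q q) $$ (a,b))" for k
    using lindblad_funpow_mixture[OF \<rho> \<rho>, where f = "\<lambda>q. if q = q0 then 1 else 0"] assms(4,5)
    by simp
  show "(\<lambda>k. t^k / fact k * (generator ^^ k) (\<lambda>q. if q = q0 then 1 else 0) q) sums weight (\<lambda>q. if q = q0 then 1 else 0) q t"
    if "q < m" for q
    using q0 that by (intro generator_funpow_sums_weight) auto
qed

theorem quantum_programmable_lindblad:
  assumes "q0 < m" "Q q0 = 1\<^sub>m d" and "\<And>q. q < m \<Longrightarrow> Q q * Q q = 1\<^sub>m d"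
  shows "quantum_programmable d (lindblad d jumps)"
proof (rule quantum_programmable_random_unitary[where w = "weight (\<lambda>q. if q = q0 then 1 else 0)"])
  have \<delta>: "\<And>q. (if q = q0 then 1 else 0) \<ge> (0::real)" "(\<Sum>q<m. (if q = q0 then 1 else 0) :: real) = 1"
    using assms(1) by auto
  show "weight (\<lambda>q. if q = q0 then 1 else 0) q t \<ge> 0" if "q < m" "t \<ge> 0" for q t
    by (rule weight_nonneg[OF \<delta> that])
  show "(\<Sum>q<m. weight (\<lambda>q. if q = q0 then 1 else 0) q t) = 1" for t
    by (rule sum_weight[OF \<delta>])
  show "continuous_on {0..} (weight (\<lambda>q. if q = q0 then 1 else 0) q)" if "q < m" for q
    by (intro continuous_at_imp_continuous_on ballI isCont_weight[OF \<delta> that])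
  show "Q q \<in> carrier_mat d d" "adj (Q q) * Q q = 1\<^sub>m d" if "q < m" for q
    using Q_hermitian[OF that] assms(3)[OF that] by simp_all
  show "exp_super d (lindblad d jumps) t \<rho> $$ (i,j)
      = (\<Sum>q<m. of_real (weight (\<lambda>q. if q = q0 then 1 else 0) q t) * (Q q * \<rho> * adj (Q q)) $$ (i,j))"
    if "\<rho> \<in> carrier_mat d d" "i < d" "j < d" for t \<rho> i j
    unfolding exp_super_lindblad_mixture[OF assms(1,2) that] using Q_hermitian
    by (intro sum.cong refl) simp
qed

end

theorem theorem1:
  fixes n :: nat and jumps :: "(real \<times> complex mat) list"
  assumes "n \<ge> 1"
    and "\<forall>(g,P) \<in> set jumps. g \<ge> 0 \<and> is_pauli n P"
  shows "quantum_programmable (2^n) (lindblad (2^n) jumps)"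
proof -
  define Q where "Q = (!) (pauli_list n)"
  define m where "m = length (pauli_list n)"
  have Q_pauli: "is_pauli n (Q q)" if "q < m" for q
    using that by (simp add: Q_def m_def is_pauli_iff_in_pauli_list)
  have jump: "fst (jumps ! i) \<ge> 0 \<and> is_pauli n (snd (jumps ! i))" if "i < length jumps" for i
    using assms(2) nth_mem[OF that] by (metis (mono_tags, lifting) case_prodD prod.collapse)
  have "\<exists>q' < m. \<exists>c. c * cnj c = 1 \<and> snd (jumps ! i) * Q q = c \<cdot>\<^sub>m Q q'"
    if "i < length jumps" "q < m" for i q
    using pauli_list_mult_closed jump that unfolding Q_def m_def by blast
  then obtain hop where hop: "\<And>i q. i < length jumps \<Longrightarrow> q < m \<Longrightarrow>
      hop i q < m \<and> (\<exists>c. c * cnj c = 1 \<and> snd (jumps ! i) * Q q = c \<cdot>\<^sub>m Q (hop i q))"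
    by metis
  note Q = is_pauli_hermitian_involution[OF Q_pauli]
  interpret lindblad_conj_family jumps m hop "2^n" Q
    using assms(2) hop Q jump by unfold_locales (auto dest: is_pauli_hermitian_involution)
  obtain q0 where "q0 < m" "Q q0 = 1\<^sub>m (2^n)"
    using is_pauli_one is_pauli_iff_in_pauli_list unfolding Q_def m_def by (metis in_set_conv_nth)
  then show ?thesis
    using Q by (intro quantum_programmable_lindblad) auto
qed

end
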